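(* Let $k$ be a field. The map sending a generic configuration of four flags $([x_m],[f_m])_{1\le m\le 4}$ in $k^3$ to the $4$-tuple $(z_{12},z_{21},z_{34},z_{43})$ of its edge coordinates induces a bijection from the set of generic configurations of four flags modulo the diagonal action of $\mathrm{PGL}(3,k)$ onto $(k\setminus\{0,1\})^4$. In other words, a tetrahedron of flags is parametrized by the $4$-tuple $(z_{12},z_{21},z_{34},z_{43})$ of elements of $k\setminus\{0,1\}$.
   Context: A flag in $V=k^3$ is a pair $([x],[f])\in\mathbb{P}(V)\times\mathbb{P}(V^* )$ with $f(x)=0$. A tetrahedron of flags (generic configuration of four flags) is an ordered $4$-tuple of flags $([x_m],[f_m])$ such that the points $[x_m]$ are pairwise distinct with no three collinear, and $f_m(x_n)\neq0$ for $m\neq n$. For distinct $i,j$, choose $k',l$ with $(1,2,3,4)\mapsto(i,j,k',l)$ an even permutation and set $z_{ij}=\frac{f_i(x_{k'})\det(x_i,x_j,x_l)}{f_i(x_l)\det(x_i,x_j,x_{k'})}$ (equivalently, the cross-ratio $[\ker f_i,(x_ix_j),(x_ix_{k'}),(x_ix_l)]$ in the pencil of lines through $[x_i]$, with the convention that the cross-ratio of $p_1,p_2,p_3,p_4$ is $\frac{(p_1-p_3)(p_2-p_4)}{(p_1-p_4)(p_2-p_3)}$). *)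

theory Defs
  imports "HOL-Analysis.Analysis"
begin

text \<open>Vectors of V = k^3 and covectors of V* are both represented as elements of 'k^3.
  The pairing of a covector f with a vector x is f(x).\<close>

definition pairing :: "'k::field ^ 3 \<Rightarrow> 'k ^ 3 \<Rightarrow> 'k" where
  "pairing f x = (\<Sum>i\<in>UNIV. f $ i * x $ i)"

definition det3 :: "'k::field ^ 3 \<Rightarrow> 'k ^ 3 \<Rightarrow> 'k ^ 3 \<Rightarrow> 'k" where
  "det3 x y z = det (vector [x, y, z] :: 'k ^ 3 ^ 3)"

text \<open>A configuration of four flags is a list of four pairs (x_m, f_m) of representatives;
  the m-th flag (m = 1..4) is at list position m - 1.\<close>

type_synonym 'k config4 = "(('k ^ 3) \<times> ('k ^ 3)) list"

definition pt :: "'k config4 \<Rightarrow> nat \<Rightarrow> 'k ^ 3" where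
  "pt F m = fst (F ! (m - 1))"

definition cv :: "'k config4 \<Rightarrow> nat \<Rightarrow> 'k ^ 3" where
  "cv F m = snd (F ! (m - 1))"

definition is_flag :: "('k::field ^ 3) \<times> ('k ^ 3) \<Rightarrow> bool" where
  "is_flag p \<longleftrightarrow> fst p \<noteq> 0 \<and> snd p \<noteq> 0 \<and> pairing (snd p) (fst p) = 0"

definition generic_config :: "'k::field config4 \<Rightarrow> bool" where
  "generic_config F \<longleftrightarrow>
     length F = 4 \<and> (\<forall>p\<in>set F. is_flag p) \<and>
     (\<forall>m\<in>{1..4}. \<forall>n\<in>{1..4}. m \<noteq> n \<longrightarrow> (\<forall>c. pt F m \<noteq> c *s pt F n)) \<and>
     (\<forall>m\<in>{1..4}. \<forall>n\<in>{1..4}. \<forall>p\<in>{1..4}. m \<noteq> n \<and> n \<noteq> p \<and> m \<noteq> p \<longrightarrow>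
        det3 (pt F m) (pt F n) (pt F p) \<noteq> 0) \<and>
     (\<forall>m\<in>{1..4}. \<forall>n\<in>{1..4}. m \<noteq> n \<longrightarrow> pairing (cv F m) (pt F n) \<noteq> 0)"

definition generic_configs :: "'k::field config4 set" where
  "generic_configs = {F. generic_config F}"

text \<open>Diagonal action of PGL(3,k) on configurations of flags, modulo rescaling of
  representatives: g.([x],[f]) = ([g x],[f \<circ> g^{-1}]).\<close>

definition pgl_equiv :: "'k::field config4 rel" where
  "pgl_equiv = {(F, G). length F = 4 \<and> length G = 4 \<and>
     (\<exists>(A :: 'k ^ 3 ^ 3) B. A ** B = mat 1 \<and> B ** A = mat 1 \<and>
       (\<forall>m\<in>{1..4}. \<exists>a b. a \<noteq> 0 \<and> b \<noteq> 0 \<and>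
          pt G m = a *s (A *v pt F m) \<and> cv G m = b *s (cv F m v* B)))}"

text \<open>Edge coordinate z_ij, where (i,j,k,l) is an even permutation of (1,2,3,4).\<close>

definition zc :: "'k::field config4 \<Rightarrow> nat \<Rightarrow> nat \<Rightarrow> nat \<Rightarrow> nat \<Rightarrow> 'k" where
  "zc F i j k l =
     (pairing (cv F i) (pt F k) * det3 (pt F i) (pt F j) (pt F l)) /
     (pairing (cv F i) (pt F l) * det3 (pt F i) (pt F j) (pt F k))"

text \<open>(z12, z21, z34, z43); the even completions are (1,2,3,4), (2,1,4,3), (3,4,1,2), (4,3,2,1).\<close>

definition edge_coords :: "'k::field config4 \<Rightarrow> 'k \<times> 'k \<times> 'k \<times> 'k" where
  "edge_coords F = (zc F 1 2 3 4, zc F 2 1 4 3, zc F 3 4 1 2, zc F 4 3 2 1)"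

end

theory Submission
  imports Defs
begin

text \<open>Edge coordinates are projective invariants: acting by an invertible matrix and rescaling
  the representatives multiplies numerator and denominator of each z_ij by the same nonzero
  constant. Conversely, the four points of a generic configuration form a projective frame, so
  a projective transformation moves them to e1, e2, e3, e1 + e2 + e3. Each covector then vanishes
  on its own point and on none of the others, which leaves it a single degree of freedom up to
  scale, and that freedom is read off from one edge coordinate. Hence every generic
  configuration is equivalent to an explicit normal form determined by (z12, z21, z34, z43),
  and this normal form is generic exactly when all four coordinates avoid 0 and 1.\<close>

lemma pairing_exp: "pairing f x = f$1 * x$1 + f$2 * x$2 + f$3 * x$3"
  by (simp add: pairing_def sum_3)

lemma det3_exp: "det3 x y z =
    x$1 * y$2 * z$3 + x$2 * y$3 * z$1 + x$3 * y$1 * z$2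
  - x$1 * y$3 * z$2 - x$2 * y$1 * z$3 - x$3 * y$2 * z$1"
  by (simp add: det3_def det_3)

lemma ball_1_to_4: "(\<forall>m\<in>{1..4::nat}. P m) \<longleftrightarrow> P 1 \<and> P 2 \<and> P 3 \<and> P 4"
  by (auto simp: le_Suc_eq numeral_eq_Suc)

lemma pairing_vector_matrix_mult: "pairing (f v* B) x = pairing f (B *v x)"
  by (simp add: pairing_def vector_matrix_mult_def matrix_vector_mult_def
      sum_distrib_left sum_distrib_right mult.assoc mult.left_commute) (rule sum.swap)

lemma pairing_scale: "pairing (b *s f) (a *s x) = b * a * pairing f x"
  by (simp add: pairing_def sum_distrib_left mult_ac)

lemma det3_scale: "det3 (a *s x) (b *s y) (c *s z) = a * b * c * det3 x y z"
  by (simp add: det3_exp algebra_simps)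

lemma det3_matrix_vector_mult: "det3 (A *v x) (A *v y) (A *v z) = det A * det3 x y z"
proof -
  have "vector [A *v x, A *v y, A *v z] = (vector [x, y, z] :: 'a::field^3^3) ** transpose A"
    by (simp add: vec_eq_iff forall_3 matrix_matrix_mult_def matrix_vector_mult_def
        transpose_def mult.commute)
  then show ?thesis
    unfolding det3_def by (simp add: det_mul)
qed

lemma det3_cramer:
  "det3 x1 x2 x3 *s x4 = det3 x4 x2 x3 *s x1 + det3 x1 x4 x3 *s x2 + det3 x1 x2 x4 *s x3"
  by (simp add: vec_eq_iff forall_3 det3_exp algebra_simps)

lemma projective_frame:
  fixes x1 x2 x3 x4 :: "'k::field^3"
  assumes "det3 x1 x2 x3 \<noteq> 0" "det3 x4 x2 x3 \<noteq> 0" "det3 x1 x4 x3 \<noteq> 0" "det3 x1 x2 x4 \<noteq> 0"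
  obtains A B :: "'k^3^3" and l1 l2 l3 :: 'k
  where "A ** B = mat 1" "B ** A = mat 1" "l1 \<noteq> 0" "l2 \<noteq> 0" "l3 \<noteq> 0"
    "l1 *s (A *v x1) = vector [1, 0, 0]" "l2 *s (A *v x2) = vector [0, 1, 0]"
    "l3 *s (A *v x3) = vector [0, 0, 1]" "A *v x4 = vector [1, 1, 1]"
proof -
  define l1 l2 l3 where l_def: "l1 = det3 x4 x2 x3 / det3 x1 x2 x3"
    "l2 = det3 x1 x4 x3 / det3 x1 x2 x3" "l3 = det3 x1 x2 x4 / det3 x1 x2 x3"
  have l: "l1 \<noteq> 0" "l2 \<noteq> 0" "l3 \<noteq> 0"
    using assms by (simp_all add: l_def)
  have x4: "x4 = l1 *s x1 + l2 *s x2 + l3 *s x3"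
    using det3_cramer[of x1 x2 x3 x4] assms(1)
    by (simp add: l_def vec_eq_iff forall_3 field_simps)
  \<comment> \<open>B maps e1, e2, e3 to l1 x1, l2 x2, l3 x3, and by Cramer's rule e1 + e2 + e3 to x4.\<close>
  define B :: "'k^3^3" where "B = transpose (vector [l1 *s x1, l2 *s x2, l3 *s x3])"
  have Bv: "B *v v = v$1 *s (l1 *s x1) + v$2 *s (l2 *s x2) + v$3 *s (l3 *s x3)" for v
    unfolding B_def
    by (simp add: vec_eq_iff forall_3 matrix_vector_mult_def sum_3 transpose_def mult.commute)
  have "det B = l1 * l2 * l3 * det3 x1 x2 x3"
    unfolding B_def det_transpose det3_def[symmetric] by (simp add: det3_exp algebra_simps)
  then have "invertible B"
    using assms(1) l by (simp add: invertible_det_nz)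
  then obtain A where AB: "A ** B = mat 1" "B ** A = mat 1"
    unfolding invertible_def by blast
  have "A *v (B *v v) = v" for v
    using AB by (simp add: matrix_vector_mul_assoc)
  from this[of "vector [1, 0, 0]"] this[of "vector [0, 1, 0]"]
    this[of "vector [0, 0, 1]"] this[of "vector [1, 1, 1]"]
  show thesis
    using AB l by (intro that) (simp_all add: Bv x4 vector_scalar_commute)
qed

lemma bij_betw_quotient_the_elem:
  assumes r: "equiv U r" and "C \<subseteq> U" and f: "f respects r" and "f ` C = T"
    and reflect: "\<And>x y. x \<in> C \<Longrightarrow> y \<in> C \<Longrightarrow> f x = f y \<Longrightarrow> (x, y) \<in> r"
  shows "bij_betw (\<lambda>X. the_elem (f ` X)) (C // r) T"
proof -
  have the_elem_class: "the_elem (f ` r``{x}) = f x" if "x \<in> C" for x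
  proof -
    have "x \<in> r``{x}"
      using equiv_class_self[OF r] \<open>C \<subseteq> U\<close> that by blast
    moreover have "f y = f x" if "y \<in> r``{x}" for y
      using that congruentD[OF f] by (metis Image_singleton_iff)
    ultimately have "f ` r``{x} = {f x}"
      by blast
    then show ?thesis
      by simp
  qed
  show ?thesis
  proof (rule bij_betwI')
    fix X Y assume "X \<in> C // r" "Y \<in> C // r"
    then obtain x y where xy: "x \<in> C" "X = r``{x}" "y \<in> C" "Y = r``{y}"
      by (auto elim!: quotientE)
    then have "f x = f y \<longleftrightarrow> r``{x} = r``{y}"
      using reflect equiv_class_eq[OF r] eq_equiv_class[OF _ r] \<open>C \<subseteq> U\<close> congruentD[OF f]
      by blast
    then show "(the_elem (f ` X) = the_elem (f ` Y)) = (X = Y)"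
      using the_elem_class xy by simp
  next
    show "the_elem (f ` X) \<in> T" if "X \<in> C // r" for X
      using that the_elem_class \<open>f ` C = T\<close> by (auto elim!: quotientE)
  next
    show "\<exists>X\<in>C // r. t = the_elem (f ` X)" if t: "t \<in> T" for t
    proof -
      obtain x where "x \<in> C" "t = f x"
        using t \<open>f ` C = T\<close> by blast
      then show ?thesis
        using the_elem_class quotientI by metis
    qed
  qed
qed

definition maps_flags :: "'k::field^3^3 \<Rightarrow> 'k^3^3 \<Rightarrow> 'k config4 \<Rightarrow> 'k config4 \<Rightarrow> bool" where
  "maps_flags A B F G \<longleftrightarrow> (\<forall>m\<in>{1..4}. \<exists>a b. a \<noteq> 0 \<and> b \<noteq> 0 \<and>
     pt G m = a *s (A *v pt F m) \<and> cv G m = b *s (cv F m v* B))"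

lemma pgl_equiv_iff:
  "(F, G) \<in> pgl_equiv \<longleftrightarrow> length F = 4 \<and> length G = 4 \<and>
     (\<exists>A B. A ** B = mat 1 \<and> B ** A = mat 1 \<and> maps_flags A B F G)"
  unfolding pgl_equiv_def maps_flags_def by auto

lemma maps_flags_id: "maps_flags (mat 1) (mat 1) F F"
  unfolding maps_flags_def by (auto intro!: exI[of _ 1])

lemma maps_flags_inverse:
  assumes "A ** B = mat 1" "B ** A = mat 1" "maps_flags A B F G"
  shows "maps_flags B A G F"
  unfolding maps_flags_def
proof
  fix m :: nat assume "m \<in> {1..4}"
  with assms(3) obtain a b where ab: "a \<noteq> 0" "b \<noteq> 0"
    "pt G m = a *s (A *v pt F m)" "cv G m = b *s (cv F m v* B)"
    unfolding maps_flags_def by blast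
  then have "pt F m = inverse a *s (B *v pt G m)" "cv F m = inverse b *s (cv G m v* A)"
    using assms(1,2) by (simp_all add: vector_scalar_commute scalar_vector_matrix_assoc
        matrix_vector_mul_assoc vector_matrix_mul_assoc)
  then show "\<exists>a b. a \<noteq> 0 \<and> b \<noteq> 0 \<and> pt F m = a *s (B *v pt G m) \<and> cv F m = b *s (cv G m v* A)"
    using ab by (metis inverse_nonzero_iff_nonzero)
qed

lemma maps_flags_comp:
  assumes "maps_flags A B F G" "maps_flags A' B' G H"
  shows "maps_flags (A' ** A) (B ** B') F H"
  unfolding maps_flags_def
proof
  fix m :: nat assume m: "m \<in> {1..4}"
  obtain a b where "a \<noteq> 0" "b \<noteq> 0" "pt G m = a *s (A *v pt F m)" "cv G m = b *s (cv F m v* B)"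
    using assms(1) m unfolding maps_flags_def by blast
  moreover obtain a' b' where "a' \<noteq> 0" "b' \<noteq> 0"
    "pt H m = a' *s (A' *v pt G m)" "cv H m = b' *s (cv G m v* B')"
    using assms(2) m unfolding maps_flags_def by blast
  ultimately show "\<exists>a b. a \<noteq> 0 \<and> b \<noteq> 0 \<and>
      pt H m = a *s ((A' ** A) *v pt F m) \<and> cv H m = b *s (cv F m v* (B ** B'))"
    by (intro exI[of _ "a' * a"] exI[of _ "b' * b"])
      (simp add: vector_scalar_commute matrix_vector_mul_assoc scalar_vector_matrix_assoc
        vector_matrix_mul_assoc)
qed

lemma pgl_equiv_refl: "length F = 4 \<Longrightarrow> (F, F) \<in> pgl_equiv"
  unfolding pgl_equiv_iff using maps_flags_id by (metis matrix_mul_lid)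

lemma equiv_pgl_equiv: "equiv {F. length F = 4} (pgl_equiv :: 'k::field config4 rel)"
proof (rule equivI)
  show "refl_on {F. length F = 4} (pgl_equiv :: 'k config4 rel)"
    by (rule refl_onI) (auto intro: pgl_equiv_refl)
  show "sym (pgl_equiv :: 'k config4 rel)"
    by (auto simp: sym_def pgl_equiv_iff intro: maps_flags_inverse)
  show "trans (pgl_equiv :: 'k config4 rel)"
  proof (rule transI)
    fix F G H :: "'k config4"
    assume "(F, G) \<in> pgl_equiv" "(G, H) \<in> pgl_equiv"
    then obtain A B A' B' where "A ** B = mat 1" "B ** A = mat 1" "maps_flags A B F G"
      "A' ** B' = mat 1" "B' ** A' = mat 1" "maps_flags A' B' G H" "length F = 4" "length H = 4"
      unfolding pgl_equiv_iff by blast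
    moreover have "(A' ** A) ** (B ** B') = mat 1" "(B ** B') ** (A' ** A) = mat 1"
      using calculation by (metis matrix_mul_assoc matrix_mul_lid)+
    ultimately show "(F, H) \<in> pgl_equiv"
      unfolding pgl_equiv_iff by (blast intro: maps_flags_comp)
  qed
qed (auto simp: pgl_equiv_iff)

lemma pairing_maps_flags:
  assumes "B ** A = mat 1"
    and "pt G n = a *s (A *v pt F n)" "cv G m = b *s (cv F m v* B)"
  shows "pairing (cv G m) (pt G n) = b * a * pairing (cv F m) (pt F n)"
  using assms by (simp add: pairing_scale pairing_vector_matrix_mult matrix_vector_mul_assoc)

lemma zc_maps_flags:
  assumes AB: "A ** B = mat 1" "B ** A = mat 1" and "maps_flags A B F G"
    and "i \<in> {1..4}" "j \<in> {1..4}" "k \<in> {1..4}" "l \<in> {1..4}"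
  shows "zc G i j k l = zc F i j k l"
proof -
  obtain ai bi where i: "ai \<noteq> 0" "bi \<noteq> 0"
    "pt G i = ai *s (A *v pt F i)" "cv G i = bi *s (cv F i v* B)"
    using assms(3,4) unfolding maps_flags_def by blast
  obtain aj where j: "aj \<noteq> 0" "pt G j = aj *s (A *v pt F j)"
    using assms(3,5) unfolding maps_flags_def by blast
  obtain ak where k: "ak \<noteq> 0" "pt G k = ak *s (A *v pt F k)"
    using assms(3,6) unfolding maps_flags_def by blast
  obtain al where l: "al \<noteq> 0" "pt G l = al *s (A *v pt F l)"
    using assms(3,7) unfolding maps_flags_def by blast
  define c where "c = bi * ai * aj * ak * al * det A"
  have "det A \<noteq> 0"
    using AB(1) by (metis det_I det_mul mult_zero_left zero_neq_one)
  then have "c \<noteq> 0"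
    using i j k l by (simp add: c_def)
  have "zc G i j k l = (c * (pairing (cv F i) (pt F k) * det3 (pt F i) (pt F j) (pt F l))) /
      (c * (pairing (cv F i) (pt F l) * det3 (pt F i) (pt F j) (pt F k)))"
    unfolding zc_def pairing_maps_flags[OF AB(2) k(2) i(4)] pairing_maps_flags[OF AB(2) l(2) i(4)]
    by (simp add: c_def i(3) j(2) k(2) l(2) det3_scale det3_matrix_vector_mult mult_ac)
  also have "\<dots> = zc F i j k l"
    using \<open>c \<noteq> 0\<close> by (simp add: zc_def)
  finally show ?thesis .
qed

lemma edge_coords_respects_pgl_equiv: "edge_coords respects pgl_equiv"
proof (rule congruentI)
  fix F G :: "'k::field config4"
  assume "(F, G) \<in> pgl_equiv"
  then obtain A B where "A ** B = mat 1" "B ** A = mat 1" "maps_flags A B F G"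
    unfolding pgl_equiv_iff by blast
  then show "edge_coords F = edge_coords G"
    unfolding edge_coords_def by (simp add: zc_maps_flags)
qed

definition transverse_flags :: "'k::field config4 \<Rightarrow> bool" where
  "transverse_flags F \<longleftrightarrow> (\<forall>m\<in>{1..4}. \<forall>n\<in>{1..4}. pairing (cv F m) (pt F n) = 0 \<longleftrightarrow> m = n)"

lemma transverse_flags_maps_flags:
  assumes "B ** A = mat 1" "maps_flags A B F G" "transverse_flags F"
  shows "transverse_flags G"
  unfolding transverse_flags_def
proof (intro ballI)
  fix m n :: nat assume mn: "m \<in> {1..4}" "n \<in> {1..4}"
  obtain a where a: "a \<noteq> 0" "pt G n = a *s (A *v pt F n)"
    using assms(2) mn unfolding maps_flags_def by blast
  obtain b where b: "b \<noteq> 0" "cv G m = b *s (cv F m v* B)"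
    using assms(2) mn unfolding maps_flags_def by blast
  have "pairing (cv G m) (pt G n) = b * a * pairing (cv F m) (pt F n)"
    using assms(1) a(2) b(2) by (rule pairing_maps_flags)
  then show "pairing (cv G m) (pt G n) = 0 \<longleftrightarrow> m = n"
    using a(1) b(1) assms(3) mn unfolding transverse_flags_def by simp
qed

lemma generic_config_transverse_flags:
  assumes "generic_config F"
  shows "transverse_flags F"
  unfolding transverse_flags_def
proof (intro ballI)
  fix m n :: nat assume mn: "m \<in> {1..4}" "n \<in> {1..4}"
  then have "F ! (m - 1) \<in> set F"
    using assms by (auto simp: generic_config_def)
  then have "pairing (cv F m) (pt F m) = 0"
    using assms by (auto simp: generic_config_def is_flag_def pt_def cv_def)
  moreover have "m \<noteq> n \<Longrightarrow> pairing (cv F m) (pt F n) \<noteq> 0"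
    using assms mn unfolding generic_config_def by blast
  ultimately show "pairing (cv F m) (pt F n) = 0 \<longleftrightarrow> m = n"
    by blast
qed

abbreviation edge_coord_range :: "('k::field \<times> 'k \<times> 'k \<times> 'k) set" where
  "edge_coord_range \<equiv> (UNIV - {0, 1}) \<times> (UNIV - {0, 1}) \<times> (UNIV - {0, 1}) \<times> (UNIV - {0, 1})"

text \<open>The points of the normal form are the standard projective frame; each covector is the
  one through its point whose edge coordinate is the corresponding entry of z.\<close>

definition std_config :: "'k::field \<times> 'k \<times> 'k \<times> 'k \<Rightarrow> 'k config4" where
  "std_config = (\<lambda>(z1, z2, z3, z4).
     [(vector [1, 0, 0], vector [0, 1 - z1, z1]), (vector [0, 1, 0], vector [z2 - 1, 0, 1]),
      (vector [0, 0, 1], vector [- z3, 1, 0]), (vector [1, 1, 1], vector [1, - z4, z4 - 1])])"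

lemma pt_cv_std_config:
  "pt (std_config (z1, z2, z3, z4)) 1 = vector [1, 0, 0]"
  "pt (std_config (z1, z2, z3, z4)) 2 = vector [0, 1, 0]"
  "pt (std_config (z1, z2, z3, z4)) 3 = vector [0, 0, 1]"
  "pt (std_config (z1, z2, z3, z4)) 4 = vector [1, 1, 1]"
  "cv (std_config (z1, z2, z3, z4)) 1 = vector [0, 1 - z1, z1]"
  "cv (std_config (z1, z2, z3, z4)) 2 = vector [z2 - 1, 0, 1]"
  "cv (std_config (z1, z2, z3, z4)) 3 = vector [- z3, 1, 0]"
  "cv (std_config (z1, z2, z3, z4)) 4 = vector [1, - z4, z4 - 1]"
  by (simp_all add: std_config_def pt_def cv_def)

lemma length_std_config: "length (std_config z) = 4"
  by (simp add: std_config_def split: prod.split)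

lemma edge_coords_std_config:
  fixes z :: "'k::field \<times> 'k \<times> 'k \<times> 'k"
  shows "edge_coords (std_config z) = z"
proof -
  have "edge_coords (std_config (z1, z2, z3, z4)) = (z1, z2, z3, z4)" for z1 z2 z3 z4 :: 'k
    unfolding edge_coords_def zc_def pt_cv_std_config by (simp add: pairing_exp det3_exp)
  then show ?thesis
    by (cases z) simp
qed

lemma generic_config_std_config:
  assumes "z \<in> edge_coord_range"
  shows "generic_config (std_config z)"
proof -
  obtain z1 z2 z3 z4 where z: "z = (z1, z2, z3, z4)"
    by (cases z) blast
  have "z1 \<noteq> 0" "z2 \<noteq> 0" "z3 \<noteq> 0" "z4 \<noteq> 0" "1 - z1 \<noteq> 0" "z2 - 1 \<noteq> 0" "1 - z3 \<noteq> 0" "z4 - 1 \<noteq> 0"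
    using assms z by auto
  then show ?thesis
    unfolding generic_config_def z ball_1_to_4 pt_cv_std_config
    by (simp add: std_config_def is_flag_def vec_eq_iff forall_3 pairing_exp det3_exp)
qed

lemma framed_config_pgl_equiv_std_config:
  fixes G :: "'k::field config4"
  assumes "length G = 4" "transverse_flags G"
    and "pt G 1 = vector [1, 0, 0]" "pt G 2 = vector [0, 1, 0]"
        "pt G 3 = vector [0, 0, 1]" "pt G 4 = vector [1, 1, 1]"
  shows "edge_coords G \<in> edge_coord_range"
    and "(G, std_config (edge_coords G)) \<in> pgl_equiv"
proof -
  define f1 f2 f3 f4 where f_def: "f1 = cv G 1" "f2 = cv G 2" "f3 = cv G 3" "f4 = cv G 4"
  \<comment> \<open>Incidence puts a zero into each covector; transversality makes the rest nonzero.\<close>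
  have f: "f1$1 = 0" "f1$2 \<noteq> 0" "f1$3 \<noteq> 0" "f1$2 + f1$3 \<noteq> 0"
    "f2$2 = 0" "f2$1 \<noteq> 0" "f2$3 \<noteq> 0" "f2$1 + f2$3 \<noteq> 0"
    "f3$3 = 0" "f3$1 \<noteq> 0" "f3$2 \<noteq> 0" "f3$1 + f3$2 \<noteq> 0"
    "f4$1 + f4$2 + f4$3 = 0" "f4$1 \<noteq> 0" "f4$2 \<noteq> 0" "f4$3 \<noteq> 0"
    using assms(2) unfolding transverse_flags_def ball_1_to_4 assms(3-6) f_def
    by (auto simp: pairing_exp)
  have f4: "f4$3 = - (f4$1 + f4$2)" "f4$1 + f4$2 \<noteq> 0"
    using f(13,16) by (metis add.commute add_eq_0_iff2, auto)
  have coords: "edge_coords G =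
      (f1$3 / (f1$2 + f1$3), (f2$1 + f2$3) / f2$3, - (f3$1 / f3$2), - (f4$2 / f4$1))"
    using f unfolding edge_coords_def zc_def assms(3-6) f_def
    by (simp add: pairing_exp det3_exp field_simps)
  show "edge_coords G \<in> edge_coord_range"
    using f f4 unfolding coords by (auto simp: field_simps neg_eq_iff_add_eq_0)
  have cv: "cv (std_config (edge_coords G)) 1 = inverse (f1$2 + f1$3) *s f1"
    "cv (std_config (edge_coords G)) 2 = inverse (f2$3) *s f2"
    "cv (std_config (edge_coords G)) 3 = inverse (f3$2) *s f3"
    "cv (std_config (edge_coords G)) 4 = inverse (f4$1) *s f4"
    unfolding coords pt_cv_std_config using f f4(1)
    by (simp_all add: vec_eq_iff forall_3 divide_simps)
  have "\<forall>m\<in>{1..4}. pt (std_config (edge_coords G)) m = pt G m \<and>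
      (\<exists>b. b \<noteq> 0 \<and> cv (std_config (edge_coords G)) m = b *s cv G m)"
    unfolding ball_1_to_4 cv f_def[symmetric] unfolding coords pt_cv_std_config assms(3-6)
    using f f4(2) by (intro conjI refl; metis nonzero_imp_inverse_nonzero)
  then have "maps_flags (mat 1) (mat 1) G (std_config (edge_coords G))"
    unfolding maps_flags_def
    by (force intro: exI[of _ "1::'k"])
  then show "(G, std_config (edge_coords G)) \<in> pgl_equiv"
    unfolding pgl_equiv_iff using assms(1) length_std_config by (metis matrix_mul_lid)
qed

lemma generic_config_pgl_equiv_std_config:
  fixes F :: "'k::field config4"
  assumes "generic_config F"
  shows "edge_coords F \<in> edge_coord_range"
    and "(F, std_config (edge_coords F)) \<in> pgl_equiv"
proof -
  have "det3 (pt F 1) (pt F 2) (pt F 3) \<noteq> 0" "det3 (pt F 4) (pt F 2) (pt F 3) \<noteq> 0"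
    "det3 (pt F 1) (pt F 4) (pt F 3) \<noteq> 0" "det3 (pt F 1) (pt F 2) (pt F 4) \<noteq> 0"
    using assms unfolding generic_config_def by simp_all
  then obtain A B :: "'k^3^3" and l1 l2 l3
    where AB: "A ** B = mat 1" "B ** A = mat 1" and l: "l1 \<noteq> 0" "l2 \<noteq> 0" "l3 \<noteq> 0"
    and frame: "l1 *s (A *v pt F 1) = vector [1, 0, 0]" "l2 *s (A *v pt F 2) = vector [0, 1, 0]"
      "l3 *s (A *v pt F 3) = vector [0, 0, 1]" "A *v pt F 4 = vector [1, 1, 1]"
    by (rule projective_frame)
  define G :: "'k config4" where
    "G = [(vector [1, 0, 0], cv F 1 v* B), (vector [0, 1, 0], cv F 2 v* B),
          (vector [0, 0, 1], cv F 3 v* B), (vector [1, 1, 1], cv F 4 v* B)]"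
  have G: "pt G 1 = vector [1, 0, 0]" "pt G 2 = vector [0, 1, 0]"
    "pt G 3 = vector [0, 0, 1]" "pt G 4 = vector [1, 1, 1]"
    "cv G 1 = cv F 1 v* B" "cv G 2 = cv F 2 v* B" "cv G 3 = cv F 3 v* B" "cv G 4 = cv F 4 v* B"
    by (simp_all add: G_def pt_def cv_def)
  have "maps_flags A B F G"
    unfolding maps_flags_def ball_1_to_4 G frame[symmetric]
    using l by (metis one_neq_zero vector_smult_lid)
  moreover have "length F = 4" "length G = 4"
    using assms by (simp_all add: generic_config_def G_def)
  ultimately have FG: "(F, G) \<in> pgl_equiv" and "transverse_flags G"
    using AB transverse_flags_maps_flags generic_config_transverse_flags[OF assms]
    unfolding pgl_equiv_iff by blast+
  then have "edge_coords G \<in> edge_coord_range"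
    and GS: "(G, std_config (edge_coords G)) \<in> pgl_equiv"
    using framed_config_pgl_equiv_std_config \<open>length G = 4\<close> G(1-4) by blast+
  moreover have "edge_coords F = edge_coords G"
    using FG by (rule congruentD[OF edge_coords_respects_pgl_equiv])
  ultimately show "edge_coords F \<in> edge_coord_range"
    and "(F, std_config (edge_coords F)) \<in> pgl_equiv"
    using FG equiv_pgl_equiv by (auto elim!: equivE dest: transD)
qed

lemma edge_coords_generic_configs:
  "edge_coords ` (generic_configs :: 'k::field config4 set) = edge_coord_range" (is "?L = ?R")
proof
  show "?L \<subseteq> ?R"
    by (simp add: image_subset_iff generic_configs_def generic_config_pgl_equiv_std_config(1))
  show "?R \<subseteq> ?L"
  proof
    fix z :: "'k \<times> 'k \<times> 'k \<times> 'k"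
    assume "z \<in> edge_coord_range"
    then have "std_config z \<in> generic_configs"
      by (simp add: generic_configs_def generic_config_std_config)
    then show "z \<in> edge_coords ` generic_configs"
      by (rule image_eqI[where f = edge_coords, OF edge_coords_std_config[symmetric]])
  qed
qed

lemma pgl_equiv_if_edge_coords_eq:
  fixes F G :: "'k::field config4"
  assumes "generic_config F" "generic_config G" "edge_coords F = edge_coords G"
  shows "(F, G) \<in> pgl_equiv"
proof -
  have "sym (pgl_equiv :: 'k config4 rel)" "trans (pgl_equiv :: 'k config4 rel)"
    using equiv_pgl_equiv by (auto elim: equivE)
  moreover have "(F, std_config (edge_coords F)) \<in> pgl_equiv"
    using assms(1) by (rule generic_config_pgl_equiv_std_config(2))
  moreover have "(G, std_config (edge_coords F)) \<in> pgl_equiv"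
    unfolding assms(3) using assms(2) by (rule generic_config_pgl_equiv_std_config(2))
  ultimately show ?thesis
    by (blast dest: symD intro: transD)
qed

theorem mainTheorem2:
  fixes k_type :: "'k::field itself"
  defines "S \<equiv> UNIV - {0, 1 :: 'k}"
  shows "edge_coords respects (pgl_equiv :: 'k config4 rel) \<and>
         bij_betw (\<lambda>X. the_elem (edge_coords ` X))
           ((generic_configs :: 'k config4 set) // pgl_equiv) (S \<times> S \<times> S \<times> S)"
proof
  show "edge_coords respects (pgl_equiv :: 'k config4 rel)"
    by (rule edge_coords_respects_pgl_equiv)
  show "bij_betw (\<lambda>X. the_elem (edge_coords ` X))
      ((generic_configs :: 'k config4 set) // pgl_equiv) (S \<times> S \<times> S \<times> S)"
    unfolding S_def
  proof (rule bij_betw_quotient_the_elem[OF equiv_pgl_equiv])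
    show "(generic_configs :: 'k config4 set) \<subseteq> {F. length F = 4}"
      by (auto simp: generic_configs_def generic_config_def)
    show "(F, G) \<in> pgl_equiv"
      if "F \<in> generic_configs" "G \<in> generic_configs" "edge_coords F = edge_coords G" for F G :: "'k config4"
      using that by (simp add: generic_configs_def pgl_equiv_if_edge_coords_eq)
  qed (fact edge_coords_respects_pgl_equiv edge_coords_generic_configs)+
qed

end
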